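(* Let $g:[a,b]\to\mathbb R$ be left-continuous and increasing, and let $f:[a,b]\to\mathbb R$ be $g$-Lipschitz continuous with Lipschitz constant $H$. Assume moreover that $f^C$ and $g^C$ are Lipschitz continuous with Lipschitz constant $H$. Let $\{d_k\}_{k\in\Lambda}$ be the set of discontinuity points of $g$ in $(a,b)$. Then $$\Big| f^C(a)(g^C(b)-g^C(a))+f(a)\Delta^+g(a)+\Delta^+f(a)(g^C(b)-g^C(a))+\sum_{k\in\Lambda}\big[f(d_k)\Delta^+g(d_k)+\Delta^+f(d_k)(g^C(b)-g^C(d_k))\big]-\int_{[a,b)} f\,\mathrm d\mu_g\Big|\le H^2(b-a)^2,$$ and $$\Big| \tfrac{f^C(a)+f^C(b)}{2}(g^C(b)-g^C(a))+f(a)\Delta^+g(a)+\Delta^+f(a)(g^C(b)-g^C(a))+\sum_{k\in\Lambda}\big[f(d_k)\Delta^+g(d_k)+\Delta^+f(d_k)(g^C(b)-g^C(d_k))\big]-\int_{[a,b)} f\,\mathrm d\mu_g\Big|\le \tfrac{H^2}{2}(b-a)^2.$$ (Equivalently, the sums over $\{a\}\cup\{d_k\}$ may be written as $\sum_{s\in[a,b)}[f(s)\Delta^+g(s)+\Delta^+f(s)(g^C(b)-g^C(s))]$.)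
   Context: $\mu_g$ is the Lebesgue–Stieltjes measure on $[a,b)$ with $\mu_g([c,d))=g(d)-g(c)$. For a function $\varphi:[a,b]\to\mathbb R$ having right limits, $\Delta^+\varphi(t)=\varphi(t^+)-\varphi(t)$, its jump part is $\varphi^B(t)=\sum_{s\in[a,t)}\Delta^+\varphi(s)$ and its continuous part is $\varphi^C=\varphi-\varphi^B$ (applied to both $f$ and $g$). $f$ is $g$-Lipschitz continuous with constant $H$ if $|f(t)-f(s)|\le H|g(t)-g(s)|$ for all $t,s\in[a,b]$. *)

theory Defs
  imports "HOL-Analysis.Analysis"
begin

definition rlim :: "(real \<Rightarrow> real) \<Rightarrow> real \<Rightarrow> real" where
  "rlim \<phi> t = Lim (at_right t) \<phi>"

definition jump_plus :: "(real \<Rightarrow> real) \<Rightarrow> real \<Rightarrow> real" where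
  "jump_plus \<phi> t = rlim \<phi> t - \<phi> t"

(* jump part phi^B(t) = sum_{s in [a,t)} Delta^+ phi(s) (a countable, absolutely summable sum) *)
definition jump_part :: "real \<Rightarrow> (real \<Rightarrow> real) \<Rightarrow> real \<Rightarrow> real" where
  "jump_part a \<phi> t = (\<Sum>\<^sub>\<infinity>s\<in>{a..<t}. jump_plus \<phi> s)"

definition cont_part :: "real \<Rightarrow> (real \<Rightarrow> real) \<Rightarrow> real \<Rightarrow> real" where
  "cont_part a \<phi> t = \<phi> t - jump_part a \<phi> t"

(* extension of g from [a,b] to R by constants; left-continuous if g is *)
definition ext_ab :: "real \<Rightarrow> real \<Rightarrow> (real \<Rightarrow> real) \<Rightarrow> real \<Rightarrow> real" where
  "ext_ab a b g t = g (max a (min b t))"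

(* Lebesgue-Stieltjes measure mu_g with mu_g([c,d)) = g(d) - g(c) for a left-continuous
   nondecreasing g: obtained by reflecting the library's interval_measure (built on (c,d]
   for right-continuous functions) through x |-> -x. *)
definition LS_measure :: "real \<Rightarrow> real \<Rightarrow> (real \<Rightarrow> real) \<Rightarrow> real measure" where
  "LS_measure a b g = distr (interval_measure (\<lambda>x. - ext_ab a b g (- x))) borel uminus"

definition g_lipschitz_on :: "real set \<Rightarrow> real \<Rightarrow> (real \<Rightarrow> real) \<Rightarrow> (real \<Rightarrow> real) \<Rightarrow> bool" where
  "g_lipschitz_on S H g f \<longleftrightarrow> (\<forall>s\<in>S. \<forall>t\<in>S. \<bar>f t - f s\<bar> \<le> H * \<bar>g t - g s\<bar>)"

definition lipschitz_const_on :: "real set \<Rightarrow> real \<Rightarrow> (real \<Rightarrow> real) \<Rightarrow> bool" where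
  "lipschitz_const_on S H f \<longleftrightarrow> (\<forall>s\<in>S. \<forall>t\<in>S. \<bar>f t - f s\<bar> \<le> H * \<bar>t - s\<bar>)"

end

theory Submission
  imports Defs
begin

text \<open>
  Remove a finite set \<open>F\<close> of jump points of \<open>g\<close>. The atoms of \<open>\<mu>\<^sub>g\<close> at \<open>F\<close> contribute
  \<open>\<Sum>s\<in>F. f s * \<Delta>\<^sup>+g s\<close> to the integral. On \<open>R = [a,b) - F\<close> write \<open>f\<close> as \<open>f\<^sup>C\<close> plus the step
  functions carrying the jumps of \<open>f\<close> at \<open>F\<close> plus a remainder bounded by \<open>H\<close> times the jump mass
  of \<open>g\<close> outside \<open>F\<close> (as \<open>|\<Delta>\<^sup>+f| \<le> H \<Delta>\<^sup>+g\<close>); the step at \<open>s\<close> integrates to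
  \<open>\<Delta>\<^sup>+f s * (g\<^sup>C b - g\<^sup>C s)\<close> up to that mass, and \<open>\<mu>\<^sub>g R = g\<^sup>C b - g\<^sup>C a\<close> up to that mass.
  Hence, if \<open>|f\<^sup>C - c| \<le> M\<close>, the quadrature error with \<open>c * (g\<^sup>C b - g\<^sup>C a)\<close> in place of the
  continuous part is at most \<open>M * (g\<^sup>C b - g\<^sup>C a)\<close> plus a constant times the jump mass outside \<open>F\<close>,
  which can be made arbitrarily small. The choices \<open>c = f\<^sup>C a\<close> and \<open>c = (f\<^sup>C a + f\<^sup>C b) / 2\<close>
  and the Lipschitz bounds on \<open>f\<^sup>C\<close> and \<open>g\<^sup>C\<close> give the two estimates.
\<close>
lemma mono_on_tendsto_rlim:
  fixes \<phi> :: "real \<Rightarrow> real"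
  assumes "mono_on {a..b} \<phi>" "a \<le> s" "s < b"
  shows "(\<phi> \<longlongrightarrow> rlim \<phi> s) (at_right s)"
proof -
  have "(\<phi> \<longlongrightarrow> Inf (\<phi> ` ({s<..} \<inter> {..b}))) (at s within ({s<..} \<inter> {..b}))"
    by (rule Lim_right_bound[where K="\<phi> s"]) (use assms in \<open>auto intro: mono_onD\<close>)
  moreover have "at s within ({s<..} \<inter> {..b}) = at_right s"
    by (rule at_within_nhd[of _ "{..<b}"]) (use assms in auto)
  ultimately have lim: "(\<phi> \<longlongrightarrow> Inf (\<phi> ` ({s<..} \<inter> {..b}))) (at_right s)" by simp
  then have "rlim \<phi> s = Inf (\<phi> ` ({s<..} \<inter> {..b}))"
    unfolding rlim_def by (intro tendsto_Lim) simp_all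
  with lim show ?thesis by simp
qed

lemma mono_on_jump_plus_nonneg:
  fixes \<phi> :: "real \<Rightarrow> real"
  assumes mono: "mono_on {a..b} \<phi>" and s: "a \<le> s" "s < b"
  shows "0 \<le> jump_plus \<phi> s"
proof -
  have "eventually (\<lambda>x. x \<in> {s<..<b}) (at_right s)"
    unfolding eventually_at_right_field using s by auto
  then have "\<phi> s \<le> rlim \<phi> s"
    by (intro tendsto_lowerbound[OF mono_on_tendsto_rlim[OF mono s]])
       (use s in \<open>auto elim!: eventually_mono intro: mono_onD[OF mono]\<close>)
  then show ?thesis unfolding jump_plus_def by simp
qed

lemma jump_plus_eq_0_if_isCont:
  fixes \<phi> :: "real \<Rightarrow> real"
  assumes "isCont \<phi> t"
  shows "jump_plus \<phi> t = 0"
proof -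
  have "(\<phi> \<longlongrightarrow> \<phi> t) (at_right t)"
    using assms unfolding isCont_def by (rule tendsto_within_subset) simp
  then have "rlim \<phi> t = \<phi> t" unfolding rlim_def by (rule tendsto_Lim[rotated]) simp
  then show ?thesis unfolding jump_plus_def by simp
qed

lemma g_lipschitz_on_mono_on_add:
  fixes f g :: "real \<Rightarrow> real"
  assumes gm: "mono_on {a..b} g" and fl: "g_lipschitz_on {a..b} H g f"
  shows "mono_on {a..b} (\<lambda>x. f x + H * g x)"
proof (rule mono_onI)
  fix x y assume xy: "x \<in> {a..b}" "y \<in> {a..b}" "x \<le> y"
  have "g x \<le> g y" using gm xy by (auto intro: mono_onD)
  moreover have "\<bar>f y - f x\<bar> \<le> H * \<bar>g y - g x\<bar>" using fl xy unfolding g_lipschitz_on_def by blast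
  ultimately show "f x + H * g x \<le> f y + H * g y" by (auto simp: abs_le_iff right_diff_distrib)
qed

lemma g_lipschitz_on_abs_jump_plus_le:
  fixes f g :: "real \<Rightarrow> real"
  assumes gm: "mono_on {a..b} g" and fl: "g_lipschitz_on {a..b} H g f" and H: "0 \<le> H"
    and s: "a \<le> s" "s < b"
  shows "\<bar>jump_plus f s\<bar> \<le> H * jump_plus g s"
proof -
  define \<phi> where "\<phi> x = f x + H * g x" for x
  have lim_g: "(g \<longlongrightarrow> rlim g s) (at_right s)" using mono_on_tendsto_rlim[OF gm s] .
  have "(\<phi> \<longlongrightarrow> rlim \<phi> s) (at_right s)"
    using mono_on_tendsto_rlim[OF g_lipschitz_on_mono_on_add[OF gm fl] s] unfolding \<phi>_def .
  from tendsto_diff[OF this tendsto_mult_left[OF lim_g, of H]]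
  have lim: "(f \<longlongrightarrow> rlim \<phi> s - H * rlim g s) (at_right s)"
    by (simp add: \<phi>_def)
  then have "rlim f s = rlim \<phi> s - H * rlim g s"
    unfolding rlim_def by (intro tendsto_Lim) simp_all
  with lim have lim_f: "(f \<longlongrightarrow> rlim f s) (at_right s)" by simp
  have "eventually (\<lambda>x. x \<in> {s<..<b}) (at_right s)"
    unfolding eventually_at_right_field using s by auto
  then have ev: "eventually (\<lambda>x. \<bar>f x - f s\<bar> \<le> H * (g x - g s)) (at_right s)"
  proof (rule eventually_mono)
    fix x assume x: "x \<in> {s<..<b}"
    have "g s \<le> g x" using gm x s by (auto intro: mono_onD)
    moreover have "\<bar>f x - f s\<bar> \<le> H * \<bar>g x - g s\<bar>"
      using fl x s unfolding g_lipschitz_on_def by auto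
    ultimately show "\<bar>f x - f s\<bar> \<le> H * (g x - g s)" by simp
  qed
  have "\<bar>rlim f s - f s\<bar> \<le> H * (rlim g s - g s)"
    by (rule tendsto_le[of "at_right s", OF _ _ _ ev]) (auto intro!: tendsto_intros lim_f lim_g)
  then show ?thesis unfolding jump_plus_def .
qed

lemma ext_ab_mono:
  fixes g :: "real \<Rightarrow> real"
  assumes "a \<le> b" "mono_on {a..b} g" "x \<le> y"
  shows "ext_ab a b g x \<le> ext_ab a b g y"
  unfolding ext_ab_def using assms by (intro mono_onD[OF assms(2)]) auto

lemma ext_ab_tendsto_at_left:
  fixes g :: "real \<Rightarrow> real"
  assumes ab: "a < b" and glc: "\<And>t. t \<in> {a<..b} \<Longrightarrow> continuous (at_left t) g"
  shows "(ext_ab a b g \<longlongrightarrow> ext_ab a b g u) (at_left u)"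
proof -
  consider "u \<le> a" | "b < u" | "u \<in> {a<..b}" by force
  then show ?thesis
  proof cases
    case 1
    have "eventually (\<lambda>y. ext_ab a b g y = ext_ab a b g u) (at_left u)"
      unfolding eventually_at_left_field using 1 ab
      by (intro exI[of _ "u - 1"]) (auto simp: ext_ab_def max_def min_def)
    then show ?thesis by (rule tendsto_eventually)
  next
    case 2
    have "eventually (\<lambda>y. ext_ab a b g y = ext_ab a b g u) (at_left u)"
      unfolding eventually_at_left_field using 2 ab
      by (intro exI[of _ b]) (auto simp: ext_ab_def max_def min_def)
    then show ?thesis by (rule tendsto_eventually)
  next
    case 3
    have "(g \<longlongrightarrow> g u) (at_left u)" using glc[OF 3] by (simp add: continuous_within)
    moreover have "eventually (\<lambda>y. ext_ab a b g y = g y) (at_left u)"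
      unfolding eventually_at_left_field using 3 ab
      by (intro exI[of _ a]) (auto simp: ext_ab_def max_def min_def)
    moreover have "ext_ab a b g u = g u"
      using 3 by (auto simp: ext_ab_def max_def min_def)
    ultimately show ?thesis using tendsto_cong by metis
  qed
qed

lemma Diff_finite_in_sets_borel:
  fixes F :: "'a::t1_space set"
  shows "A \<in> sets borel \<Longrightarrow> finite F \<Longrightarrow> A - F \<in> sets borel"
  by (simp add: borel_closed finite_imp_closed sets.Diff)

lemma finite_in_sets:
  assumes "finite F" "\<And>x. x \<in> F \<Longrightarrow> {x} \<in> sets M"
  shows "F \<in> sets M"
proof -
  have "F = (\<Union>s\<in>F. {s})" by auto
  also have "\<dots> \<in> sets M" using assms by (intro sets.finite_UN) auto
  finally show ?thesis .
qed

lemma measure_Diff_finite: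
  assumes A: "A \<in> sets M" "emeasure M A < \<infinity>" and F: "finite F" "F \<subseteq> A"
    and sing: "\<And>x. x \<in> F \<Longrightarrow> {x} \<in> sets M"
  shows "measure M (A - F) = measure M A - (\<Sum>s\<in>F. measure M {s})"
proof -
  have "measure M (A - F) = measure M A - measure M F"
    using A F finite_in_sets[OF F(1) sing] by (intro measure_Diff) auto
  moreover have "measure M F = (\<Sum>s\<in>F. measure M {s})"
  proof (rule measure_eq_sum_singleton)
    fix s assume "s \<in> F"
    then have "emeasure M {s} \<le> emeasure M A" using F A sing by (intro emeasure_mono) auto
    then show "emeasure M {s} \<noteq> \<infinity>" using A by (auto simp: top_unique)
  qed (use F sing in auto)
  ultimately show ?thesis by simp
qed

lemma set_integral_Diff_finite:
  fixes h :: "'a \<Rightarrow> real"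
  assumes h: "set_integrable M A h" and A: "A \<in> sets M" "emeasure M A < \<infinity>"
    and F: "finite F" "F \<subseteq> A" and sing: "\<And>x. x \<in> F \<Longrightarrow> {x} \<in> sets M"
  shows "(LINT x:A|M. h x) = (LINT x:(A - F)|M. h x) + (\<Sum>s\<in>F. h s * measure M {s})"
proof -
  have Fs: "F \<in> sets M" using finite_in_sets[OF F(1) sing] .
  have "(LINT x:A|M. h x) = (LINT x:((A - F) \<union> F)|M. h x)"
    using F by (simp add: Un_absorb2)
  also have "\<dots> = (LINT x:(A - F)|M. h x) + (LINT x:F|M. h x)"
    by (rule set_integral_Un) (use h A Fs F in \<open>auto intro: set_integrable_subset\<close>)
  also have "(LINT x:F|M. h x) = (\<integral>x. h x * indicator F x \<partial>M)"
    unfolding set_lebesgue_integral_def by (simp add: mult.commute)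
  also have "\<dots> = (\<Sum>s\<in>F. h s * measure M {s})"
  proof (rule integral_indicator_finite_real)
    fix s assume s: "s \<in> F"
    then have "emeasure M {s} \<le> emeasure M A" using F A sing by (intro emeasure_mono) auto
    then show "emeasure M {s} < \<infinity>" using A by order
  qed (use F sing in auto)
  finally show ?thesis .
qed

lemma set_integrable_const_real:
  assumes "A \<in> sets M" "emeasure M A < \<infinity>"
  shows "set_integrable M A (\<lambda>_. c :: real)"
  unfolding set_integrable_def using assms
  by (simp add: integrable_mult_left)

lemma set_integral_abs_le:
  fixes h :: "'a \<Rightarrow> real"
  assumes h: "set_integrable M A h" and A: "A \<in> sets M" "emeasure M A < \<infinity>"
    and bound: "\<And>x. x \<in> A \<Longrightarrow> \<bar>h x\<bar> \<le> B"
  shows "\<bar>LINT x:A|M. h x\<bar> \<le> B * measure M A"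
proof -
  have "\<bar>LINT x:A|M. h x\<bar> \<le> (LINT x:A|M. \<bar>h x\<bar>)"
    using set_integral_norm_bound[OF h] by simp
  also have "\<dots> \<le> (LINT x:A|M. B)"
    using A h bound by (intro set_integral_mono set_integrable_abs set_integrable_const_real) auto
  also have "\<dots> = B * measure M A"
    using A by (simp add: set_integral_const)
  finally show ?thesis .
qed

lemma summable_on_abs_dominated:
  fixes \<psi> \<phi> :: "'a \<Rightarrow> real"
  assumes "\<phi> summable_on A" "\<And>x. x \<in> A \<Longrightarrow> \<bar>\<psi> x\<bar> \<le> \<phi> x"
  shows "\<psi> summable_on A"
proof -
  have "(\<lambda>x. \<bar>\<psi> x\<bar>) summable_on A"
    by (rule summable_on_comparison_test[OF assms(1)]) (use assms(2) in auto)
  then show ?thesis using summable_on_iff_abs_summable_on_real by force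
qed

lemma abs_infsum_le_dominated:
  fixes \<psi> \<phi> :: "'a \<Rightarrow> real"
  assumes "\<phi> summable_on A" "\<And>x. x \<in> A \<Longrightarrow> \<bar>\<psi> x\<bar> \<le> \<phi> x"
  shows "\<bar>infsum \<psi> A\<bar> \<le> infsum \<phi> A"
proof -
  have abs: "(\<lambda>x. \<bar>\<psi> x\<bar>) summable_on A"
    by (rule summable_on_comparison_test[OF assms(1)]) (use assms(2) in auto)
  have "\<bar>infsum \<psi> A\<bar> \<le> infsum (\<lambda>x. \<bar>\<psi> x\<bar>) A"
    using norm_infsum_bound[of \<psi> A] abs by simp
  also have "\<dots> \<le> infsum \<phi> A" using abs assms by (intro infsum_mono) auto
  finally show ?thesis .
qed

lemma infsum_split_finite:
  fixes \<phi> :: "'a \<Rightarrow> 'b::banach"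
  assumes "\<phi> summable_on A" "finite F" "F \<subseteq> A"
  shows "infsum \<phi> A = sum \<phi> F + infsum \<phi> (A - F)"
proof -
  have "infsum \<phi> (F \<union> (A - F)) = infsum \<phi> F + infsum \<phi> (A - F)"
    using assms by (intro infsum_Un_disjoint summable_on_subset_banach[OF assms(1)]) auto
  then show ?thesis using assms by (simp add: Un_absorb1)
qed

lemma lipschitz_const_on_bound_midpoint:
  fixes \<phi> :: "real \<Rightarrow> real"
  assumes lip: "lipschitz_const_on {a..b} H \<phi>" and x: "x \<in> {a..b}"
  shows "\<bar>\<phi> x - (\<phi> a + \<phi> b) / 2\<bar> \<le> H * (b - a) / 2"
proof -
  have ab: "a \<in> {a..b}" "b \<in> {a..b}" using x by auto
  have "\<bar>\<phi> x - \<phi> a\<bar> \<le> H * (x - a)" "\<bar>\<phi> x - \<phi> b\<bar> \<le> H * (b - x)"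
    using lip x ab unfolding lipschitz_const_on_def by (fastforce simp: abs_minus_commute)+
  then show ?thesis by (simp add: abs_le_iff field_simps)
qed

lemma lipschitz_const_on_bound_left:
  fixes \<phi> :: "real \<Rightarrow> real"
  assumes lip: "lipschitz_const_on {a..b} H \<phi>" and x: "x \<in> {a..b}" and H: "0 \<le> H"
  shows "\<bar>\<phi> x - \<phi> a\<bar> \<le> H * (b - a)"
proof -
  have "a \<in> {a..b}" using x by auto
  then have "\<bar>\<phi> x - \<phi> a\<bar> \<le> H * (x - a)"
    using lip x unfolding lipschitz_const_on_def by fastforce
  also have "\<dots> \<le> H * (b - a)" using x H by (intro mult_left_mono) auto
  finally show ?thesis .
qed

locale left_cont_increasing =
  fixes a b :: real and g :: "real \<Rightarrow> real"
  assumes a_less_b: "a < b" and mono_g: "mono_on {a..b} g"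
    and left_cont_g: "\<And>t. t \<in> {a<..b} \<Longrightarrow> continuous (at_left t) g"
begin

abbreviation "\<mu> \<equiv> LS_measure a b g"
abbreviation "Jg \<equiv> jump_plus g"
abbreviation "gC \<equiv> cont_part a g"

lemma sets_LS_measure [simp, measurable_cong]: "sets \<mu> = sets borel"
  unfolding LS_measure_def by simp

lemma emeasure_Ico:
  assumes "a \<le> c" "c \<le> d" "d \<le> b"
  shows "emeasure \<mu> {c..<d} = ennreal (g d - g c)"
proof -
  define G where "G x = - ext_ab a b g (- x)" for x
  have G_mono: "G x \<le> G y" if "x \<le> y" for x y
    unfolding G_def using ext_ab_mono[of a b g "-y" "-x"] a_less_b mono_g that by simp
  have G_right_cont: "continuous (at_right x) G" for x
  proof -
    have "(ext_ab a b g \<longlongrightarrow> ext_ab a b g (- x)) (at_left (- x))"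
      using ext_ab_tendsto_at_left a_less_b left_cont_g by blast
    then have "((\<lambda>y. ext_ab a b g (- y)) \<longlongrightarrow> ext_ab a b g (- x)) (at_right x)"
      unfolding filterlim_at_left_to_right by simp
    then show ?thesis unfolding continuous_within G_def by (intro tendsto_intros)
  qed
  have "uminus -` {c..<d} = {-d<..-c}" by auto
  then have "emeasure \<mu> {c..<d} = emeasure (interval_measure G) {-d<..-c}"
    unfolding LS_measure_def G_def[abs_def]
    by (subst emeasure_distr) (auto simp: sets_eq_imp_space_eq[OF sets_interval_measure])
  also have "\<dots> = ennreal (G (-c) - G (-d))"
    using assms by (intro emeasure_interval_measure_Ioc G_mono G_right_cont) auto
  also have "G (-c) - G (-d) = g d - g c"
    using assms by (simp add: G_def ext_ab_def max_def min_def)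
  finally show ?thesis .
qed

lemma measure_Ico: "a \<le> c \<Longrightarrow> c \<le> d \<Longrightarrow> d \<le> b \<Longrightarrow> measure \<mu> {c..<d} = g d - g c"
  using emeasure_Ico mono_onD[OF mono_g, of c d] by (simp add: measure_def)

lemma emeasure_less_top: "A \<subseteq> {a..<b} \<Longrightarrow> emeasure \<mu> A < \<infinity>"
  using emeasure_mono[of A "{a..<b}" \<mu>] emeasure_Ico[of a b] a_less_b
  by (auto simp: less_top[symmetric] top_unique)

lemma measure_singleton:
  assumes s: "a \<le> s" "s < b"
  shows "measure \<mu> {s} = Jg s"
proof -
  define t where "t n = s + (b - s) * inverse (real (Suc n))" for n
  have t_gt: "s < t n" for n
    using s by (simp add: t_def)
  have t_le: "t n \<le> b" for n
  proof -
    have "(b - s) * inverse (real (Suc n)) \<le> (b - s) * 1"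
      using s by (intro mult_left_mono) (auto simp: field_simps)
    then show ?thesis by (simp add: t_def)
  qed
  note t = t_gt t_le
  have "(\<lambda>n. s + (b - s) * inverse (real (Suc n))) \<longlonglongrightarrow> s + (b - s) * 0"
    by (intro tendsto_intros LIMSEQ_inverse_real_of_nat)
  then have lim_t: "t \<longlonglongrightarrow> s" by (simp add: t_def[abs_def])
  have dec: "decseq (\<lambda>n. {s..<t n})"
  proof (rule decseq_SucI)
    fix n
    have "(b - s) * inverse (real (Suc (Suc n))) \<le> (b - s) * inverse (real (Suc n))"
      using s by (intro mult_left_mono) (auto simp: field_simps)
    then show "{s..<t (Suc n)} \<subseteq> {s..<t n}" by (auto simp: t_def)
  qed
  have "(\<Inter>n. {s..<t n}) = {s}"
  proof (intro equalityI subsetI)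
    fix x assume x: "x \<in> (\<Inter>n. {s..<t n})"
    then have "x \<le> s" by (intro LIMSEQ_le_const[OF lim_t]) (auto intro: less_imp_le)
    with x show "x \<in> {s}" by auto
  qed (use t in auto)
  moreover have "(\<lambda>n. measure \<mu> {s..<t n}) \<longlonglongrightarrow> measure \<mu> (\<Inter>n. {s..<t n})"
    by (rule Lim_measure_decseq[OF _ dec]) (use t s emeasure_less_top in \<open>auto simp: less_top\<close>)
  moreover have "(\<lambda>n. measure \<mu> {s..<t n}) \<longlonglongrightarrow> Jg s"
  proof -
    have "filterlim t (at_right s) sequentially"
      by (rule tendsto_imp_filterlim_at_right[OF lim_t]) (simp add: t)
    then have "(\<lambda>n. g (t n) - g s) \<longlonglongrightarrow> rlim g s - g s"
      by (intro tendsto_intros filterlim_compose[OF mono_on_tendsto_rlim[OF mono_g s]])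
    moreover have "measure \<mu> {s..<t n} = g (t n) - g s" for n
      using measure_Ico t s by (simp add: less_imp_le)
    ultimately show ?thesis by (simp add: jump_plus_def)
  qed
  ultimately show ?thesis using LIMSEQ_unique by metis
qed

lemma jump_nonneg: "s \<in> {a..<b} \<Longrightarrow> 0 \<le> Jg s"
  using mono_on_jump_plus_nonneg[OF mono_g] by auto

lemma measure_Ico_Diff_finite:
  assumes "a \<le> c" "c \<le> d" "d \<le> b" "finite F" "F \<subseteq> {c..<d}"
  shows "measure \<mu> ({c..<d} - F) = g d - g c - sum Jg F"
proof -
  have "measure \<mu> ({c..<d} - F) = measure \<mu> {c..<d} - (\<Sum>s\<in>F. measure \<mu> {s})"
    using assms emeasure_less_top by (intro measure_Diff_finite) auto
  also have "(\<Sum>s\<in>F. measure \<mu> {s}) = sum Jg F"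
    using assms measure_singleton by (intro sum.cong) auto
  finally show ?thesis using measure_Ico assms by simp
qed

lemma sum_jump_le:
  assumes "a \<le> c" "c \<le> d" "d \<le> b" "finite F" "F \<subseteq> {c..<d}"
  shows "sum Jg F \<le> g d - g c"
  using measure_Ico_Diff_finite[OF assms] measure_nonneg[of \<mu> "{c..<d} - F"] by linarith

lemma jump_summable_on: "A \<subseteq> {a..<b} \<Longrightarrow> Jg summable_on A"
proof -
  have "bdd_above (sum Jg ` {F. F \<subseteq> {a..<b} \<and> finite F})"
    by (rule bdd_aboveI[where M = "g b - g a"]) (use sum_jump_le[of a b] a_less_b in auto)
  then have "Jg summable_on {a..<b}"
    by (intro nonneg_bdd_above_summable_on) (use jump_nonneg in auto)
  then show "A \<subseteq> {a..<b} \<Longrightarrow> Jg summable_on A"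
    using summable_on_subset_banach by blast
qed

lemma infsum_jump_nonneg: "A \<subseteq> {a..<b} \<Longrightarrow> 0 \<le> infsum Jg A"
  by (rule infsum_nonneg) (use jump_nonneg in auto)

lemma infsum_jump_mono: "A \<subseteq> B \<Longrightarrow> B \<subseteq> {a..<b} \<Longrightarrow> infsum Jg A \<le> infsum Jg B"
  by (rule infsum_mono_neutral) (use jump_summable_on jump_nonneg in auto)

lemma infsum_jump_Ico_le: "a \<le> c \<Longrightarrow> c \<le> d \<Longrightarrow> d \<le> b \<Longrightarrow> infsum Jg {c..<d} \<le> g d - g c"
  by (rule infsum_le_finite_sums) (auto intro: jump_summable_on sum_jump_le)

lemma cont_part_diff:
  assumes c: "c \<in> {a..b}"
  shows "gC b - gC c = g b - g c - infsum Jg {c..<b}"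
proof -
  have "{a..<b} = {a..<c} \<union> {c..<b}" using c by auto
  then have "infsum Jg {a..<b} = infsum Jg {a..<c} + infsum Jg {c..<b}"
    using c by (simp add: infsum_Un_disjoint jump_summable_on)
  then show ?thesis unfolding cont_part_def jump_part_def by simp
qed

lemma cont_part_diff_nonneg: "c \<in> {a..b} \<Longrightarrow> 0 \<le> gC b - gC c"
  using cont_part_diff infsum_jump_Ico_le by fastforce

lemma cont_part_diff_le: "c \<in> {a..b} \<Longrightarrow> gC b - gC c \<le> g b - g a"
  using cont_part_diff[of c] infsum_jump_nonneg[of "{c..<b}"] mono_onD[OF mono_g, of a c] by auto

lemma measure_Ico_Diff_finite_cont_part:
  assumes c: "c \<in> {a..b}" and F: "finite F"
  shows "measure \<mu> ({c..<b} - F) = gC b - gC c + infsum Jg ({c..<b} - F)"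
proof -
  define F' where "F' = F \<inter> {c..<b}"
  have F': "finite F'" "F' \<subseteq> {c..<b}" and diff: "{c..<b} - F' = {c..<b} - F"
    using F unfolding F'_def by auto
  have "measure \<mu> ({c..<b} - F) = g b - g c - sum Jg F'"
    using measure_Ico_Diff_finite[OF _ _ _ F'] c diff by auto
  moreover have "infsum Jg {c..<b} = sum Jg F' + infsum Jg ({c..<b} - F)"
    using infsum_split_finite[OF jump_summable_on F'] c diff by simp
  ultimately show ?thesis using cont_part_diff[OF c] by simp
qed

lemma jump_mass_outside_finite_small:
  assumes "0 < \<epsilon>"
  obtains F where "finite F" "F \<subseteq> {a..<b}" "infsum Jg ({a..<b} - F) < \<epsilon>"
proof -
  have "eventually (\<lambda>F. dist (sum Jg F) (infsum Jg {a..<b}) < \<epsilon>) (finite_subsets_at_top {a..<b})"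
    using infsum_tendsto[OF jump_summable_on] assms by (rule tendstoD) simp
  then obtain F where F: "finite F" "F \<subseteq> {a..<b}" "dist (sum Jg F) (infsum Jg {a..<b}) < \<epsilon>"
    unfolding eventually_finite_subsets_at_top by blast
  with infsum_split_finite[OF jump_summable_on[OF order.refl] F(1,2)] show ?thesis
    by (intro that[OF F(1,2)]) (auto simp: dist_real_def)
qed

end

locale g_lipschitz_integrand = left_cont_increasing +
  fixes f :: "real \<Rightarrow> real" and H :: real
  assumes g_lipschitz_f: "g_lipschitz_on {a..b} H g f" and H_nonneg: "0 \<le> H"
begin

abbreviation "Jf \<equiv> jump_plus f"
abbreviation "fC \<equiv> cont_part a f"
abbreviation jump_term :: "real \<Rightarrow> real" where
  "jump_term s \<equiv> f s * Jg s + Jf s * (gC b - gC s)"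

lemma abs_jump_le: "s \<in> {a..<b} \<Longrightarrow> \<bar>Jf s\<bar> \<le> H * Jg s"
  using g_lipschitz_on_abs_jump_plus_le[OF mono_g g_lipschitz_f H_nonneg] by auto

lemma jump_f_summable_on: "A \<subseteq> {a..<b} \<Longrightarrow> Jf summable_on A"
  by (rule summable_on_abs_dominated[OF summable_on_cmult_right[OF jump_summable_on]])
     (auto intro: abs_jump_le)

lemma abs_infsum_jump_f_le:
  assumes "A \<subseteq> {a..<b}"
  shows "\<bar>infsum Jf A\<bar> \<le> H * infsum Jg A"
proof -
  have "\<bar>infsum Jf A\<bar> \<le> infsum (\<lambda>s. H * Jg s) A"
    using assms by (intro abs_infsum_le_dominated summable_on_cmult_right jump_summable_on)
                   (auto intro: abs_jump_le)
  also have "\<dots> = H * infsum Jg A"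
    using assms by (intro infsum_cmult_right jump_summable_on)
  finally show ?thesis .
qed

lemma abs_f_le:
  assumes x: "x \<in> {a..b}"
  shows "\<bar>f x\<bar> \<le> \<bar>f a\<bar> + H * (g b - g a)"
proof -
  have "\<bar>f x - f a\<bar> \<le> H * \<bar>g x - g a\<bar>"
    using g_lipschitz_f x unfolding g_lipschitz_on_def by auto
  also have "\<dots> \<le> H * (g b - g a)"
    using x mono_onD[OF mono_g, of a x] mono_onD[OF mono_g, of x b] H_nonneg
    by (intro mult_left_mono) auto
  finally show ?thesis by linarith
qed

lemma set_integrable_f:
  assumes A: "A \<subseteq> {a..<b}" "A \<in> sets borel"
  shows "set_integrable \<mu> A f"
proof -
  \<comment> \<open>Measurability: \<open>f\<close> is the difference of the increasing functions \<open>f + H g\<close> and \<open>H g\<close>.\<close>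
  have "(\<lambda>x. indicator {a..b} x * (f x + H * g x)) \<in> borel_measurable borel"
    using borel_measurable_mono_on_fnc[OF g_lipschitz_on_mono_on_add[OF mono_g g_lipschitz_f]]
      borel_measurable_restrict_space_iff[of "{a..b}" borel "\<lambda>x. f x + H * g x"]
    by simp
  moreover have "(\<lambda>x. indicator {a..b} x * g x) \<in> borel_measurable borel"
    using borel_measurable_mono_on_fnc[OF mono_g]
      borel_measurable_restrict_space_iff[of "{a..b}" borel g]
    by simp
  ultimately have "(\<lambda>x. indicator {a..b} x * (f x + H * g x) - H * (indicator {a..b} x * g x))
      \<in> borel_measurable borel"
    by measurable
  moreover have "(\<lambda>x. indicator {a..b} x * (f x + H * g x) - H * (indicator {a..b} x * g x))
      = (\<lambda>x. indicator {a..b} x * f x)"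
    by (auto simp: fun_eq_iff algebra_simps)
  ultimately have "(\<lambda>x. indicator {a..b} x * f x) \<in> borel_measurable \<mu>" by simp
  moreover have "AE x in \<mu>. x \<in> A \<longrightarrow> norm (indicator {a..b} x * f x) \<le> \<bar>f a\<bar> + H * (g b - g a)"
    using A abs_f_le by (intro AE_I2) auto
  ultimately have "integrable \<mu> (\<lambda>x. indicator A x *\<^sub>R (indicator {a..b} x * f x))"
    using A emeasure_less_top by (intro integrableI_bounded_set_indicator) auto
  moreover have "(\<lambda>x. indicator A x *\<^sub>R (indicator {a..b} x * f x)) = (\<lambda>x. indicator A x *\<^sub>R f x)"
    using A by (auto simp: fun_eq_iff indicator_def)
  ultimately show ?thesis unfolding set_integrable_def by simp
qed

lemma abs_jump_term_le:
  assumes s: "s \<in> {a..<b}"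
  shows "\<bar>jump_term s\<bar> \<le> (\<bar>f a\<bar> + 2 * H * (g b - g a)) * Jg s"
proof -
  have "\<bar>jump_term s\<bar> \<le> \<bar>f s\<bar> * Jg s + \<bar>Jf s\<bar> * \<bar>gC b - gC s\<bar>"
    using jump_nonneg[OF s] by (simp add: abs_mult order_trans[OF abs_triangle_ineq])
  also have "\<dots> \<le> (\<bar>f a\<bar> + H * (g b - g a)) * Jg s + (H * Jg s) * (g b - g a)"
    using s jump_nonneg[OF s] abs_f_le abs_jump_le cont_part_diff_nonneg cont_part_diff_le H_nonneg
      mono_onD[OF mono_g, of a b] a_less_b
    by (intro add_mono mult_mono) auto
  finally show ?thesis by (simp add: algebra_simps)
qed

lemma jump_term_summable_on: "A \<subseteq> {a..<b} \<Longrightarrow> jump_term summable_on A"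
  by (rule summable_on_abs_dominated[OF summable_on_cmult_right[OF jump_summable_on]])
     (auto intro: abs_jump_term_le)

lemma infsum_jump_term_discontinuities:
  "infsum jump_term {a..<b} = jump_term a + infsum jump_term {t \<in> {a<..<b}. \<not> isCont g t}"
proof -
  have "jump_term t = 0" if "t \<in> {a<..<b}" "isCont g t" for t
    using jump_plus_eq_0_if_isCont[OF that(2)] abs_jump_le[of t] that by auto
  then have "infsum jump_term {t \<in> {a<..<b}. \<not> isCont g t} = infsum jump_term {a<..<b}"
    by (intro infsum_cong_neutral) auto
  moreover have "jump_term summable_on {a<..<b}" by (intro jump_term_summable_on) auto
  moreover have "{a..<b} = insert a {a<..<b}" using a_less_b by auto
  ultimately show ?thesis by (simp add: infsum_insert)
qed

definition jump_steps :: "real set \<Rightarrow> real \<Rightarrow> real" where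
  "jump_steps F x = (\<Sum>s\<in>F. Jf s * indicator {s<..} x)"

lemma f_minus_jump_steps:
  assumes F: "finite F" "F \<subseteq> {a..<b}" and x: "x \<in> {a..b}"
  shows "f x - fC x - jump_steps F x = infsum Jf ({a..<x} - F)"
proof -
  have "jump_steps F x = (\<Sum>s\<in>F. if s < x then Jf s else 0)"
    unfolding jump_steps_def by (intro sum.cong) (auto simp: indicator_def)
  also have "\<dots> = sum Jf {s \<in> F. s < x}"
    using F by (simp add: sum.inter_filter)
  also have "{s \<in> F. s < x} = F \<inter> {a..<x}"
    using F by auto
  finally have steps: "jump_steps F x = sum Jf (F \<inter> {a..<x})" .
  have "f x - fC x = infsum Jf {a..<x}" unfolding cont_part_def jump_part_def by simp
  also have "\<dots> = sum Jf (F \<inter> {a..<x}) + infsum Jf ({a..<x} - F \<inter> {a..<x})"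
    using F x by (intro infsum_split_finite jump_f_summable_on) auto
  also have "{a..<x} - F \<inter> {a..<x} = {a..<x} - F" by auto
  finally show ?thesis using steps by simp
qed

lemma abs_f_minus_jump_steps_le:
  assumes F: "finite F" "F \<subseteq> {a..<b}" and x: "x \<in> {a..b}"
  shows "\<bar>f x - fC x - jump_steps F x\<bar> \<le> H * infsum Jg ({a..<b} - F)"
proof -
  have "\<bar>f x - fC x - jump_steps F x\<bar> \<le> H * infsum Jg ({a..<x} - F)"
    unfolding f_minus_jump_steps[OF F x] using x by (intro abs_infsum_jump_f_le) auto
  also have "\<dots> \<le> H * infsum Jg ({a..<b} - F)"
    using x H_nonneg by (intro mult_left_mono infsum_jump_mono) auto
  finally show ?thesis .
qed

lemma indicator_mult_jump_steps:
  assumes "F \<subseteq> {a..<b}"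
  shows "indicator ({a..<b} - F) x * jump_steps F x = (\<Sum>s\<in>F. Jf s * indicator ({s..<b} - F) x)"
  unfolding jump_steps_def sum_distrib_left
  using assms by (intro sum.cong) (auto simp: indicator_def)

lemma set_integrable_jump_steps:
  assumes "finite F" "F \<subseteq> {a..<b}"
  shows "set_integrable \<mu> ({a..<b} - F) (jump_steps F)"
proof -
  have "integrable \<mu> (\<lambda>x. \<Sum>s\<in>F. Jf s * indicator ({s..<b} - F) x)"
    using assms
    by (intro Bochner_Integration.integrable_sum integrable_mult_right integrable_real_indicator
          emeasure_less_top) (auto intro: Diff_finite_in_sets_borel)
  then show ?thesis
    by (simp only: set_integrable_def real_scaleR_def indicator_mult_jump_steps[OF assms(2)])
qed

lemma set_integral_jump_steps:
  assumes F: "finite F" "F \<subseteq> {a..<b}"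
  shows "(LINT x:({a..<b} - F)|\<mu>. jump_steps F x)
    = (\<Sum>s\<in>F. Jf s * (gC b - gC s + infsum Jg ({s..<b} - F)))"
proof -
  have "(LINT x:({a..<b} - F)|\<mu>. jump_steps F x)
      = (\<integral>x. (\<Sum>s\<in>F. Jf s * indicator ({s..<b} - F) x) \<partial>\<mu>)"
    unfolding set_lebesgue_integral_def real_scaleR_def indicator_mult_jump_steps[OF F(2)] ..
  also have "\<dots> = (\<Sum>s\<in>F. \<integral>x. Jf s * indicator ({s..<b} - F) x \<partial>\<mu>)"
    using F by (intro Bochner_Integration.integral_sum integrable_mult_right
                  integrable_real_indicator emeasure_less_top) (auto intro: Diff_finite_in_sets_borel)
  also have "\<dots> = (\<Sum>s\<in>F. Jf s * measure \<mu> ({s..<b} - F))"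
    using F by (intro sum.cong) (auto simp: emeasure_less_top Diff_finite_in_sets_borel)
  also have "\<dots> = (\<Sum>s\<in>F. Jf s * (gC b - gC s + infsum Jg ({s..<b} - F)))"
    using F by (intro sum.cong refl) (auto simp: measure_Ico_Diff_finite_cont_part)
  finally show ?thesis .
qed

lemma set_integral_remove_atoms:
  assumes F: "finite F" "F \<subseteq> {a..<b}"
  shows "(LINT x:{a..<b}|\<mu>. f x) = (LINT x:({a..<b} - F)|\<mu>. f x) + (\<Sum>s\<in>F. f s * Jg s)"
proof -
  have "(LINT x:{a..<b}|\<mu>. f x) = (LINT x:({a..<b} - F)|\<mu>. f x) + (\<Sum>s\<in>F. f s * measure \<mu> {s})"
    using F by (intro set_integral_Diff_finite set_integrable_f emeasure_less_top) auto
  also have "(\<Sum>s\<in>F. f s * measure \<mu> {s}) = (\<Sum>s\<in>F. f s * Jg s)"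
    using F measure_singleton by (intro sum.cong) auto
  finally show ?thesis .
qed

lemma abs_infsum_jump_term_le:
  assumes "A \<subseteq> {a..<b}"
  shows "\<bar>infsum jump_term A\<bar> \<le> (\<bar>f a\<bar> + 2 * H * (g b - g a)) * infsum Jg A"
proof -
  have "\<bar>infsum jump_term A\<bar> \<le> infsum (\<lambda>s. (\<bar>f a\<bar> + 2 * H * (g b - g a)) * Jg s) A"
    using assms abs_jump_term_le
    by (intro abs_infsum_le_dominated summable_on_cmult_right jump_summable_on) auto
  also have "\<dots> = (\<bar>f a\<bar> + 2 * H * (g b - g a)) * infsum Jg A"
    using assms by (intro infsum_cmult_right jump_summable_on)
  finally show ?thesis .
qed

lemma abs_sum_jump_tails_le:
  assumes F: "finite F" "F \<subseteq> {a..<b}"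
  shows "\<bar>\<Sum>s\<in>F. Jf s * infsum Jg ({s..<b} - F)\<bar> \<le> H * (g b - g a) * infsum Jg ({a..<b} - F)"
proof -
  let ?e = "infsum Jg ({a..<b} - F)"
  have "\<bar>\<Sum>s\<in>F. Jf s * infsum Jg ({s..<b} - F)\<bar> \<le> (\<Sum>s\<in>F. H * ?e * Jg s)"
  proof (rule order_trans[OF sum_abs sum_mono])
    fix s assume s: "s \<in> F"
    have "0 \<le> infsum Jg ({s..<b} - F)"
      using s F by (intro infsum_jump_nonneg) auto
    moreover have "infsum Jg ({s..<b} - F) \<le> ?e"
      using s F by (intro infsum_jump_mono) auto
    ultimately have "\<bar>Jf s\<bar> * \<bar>infsum Jg ({s..<b} - F)\<bar> \<le> (H * Jg s) * ?e"
      using s F abs_jump_le H_nonneg jump_nonneg by (intro mult_mono) auto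
    then show "\<bar>Jf s * infsum Jg ({s..<b} - F)\<bar> \<le> H * ?e * Jg s"
      by (simp add: abs_mult algebra_simps)
  qed
  also have "\<dots> \<le> H * ?e * (g b - g a)"
    unfolding sum_distrib_left[symmetric] using F a_less_b H_nonneg infsum_jump_nonneg[of "{a..<b} - F"]
    by (intro mult_left_mono sum_jump_le) auto
  finally show ?thesis by (simp add: algebra_simps)
qed

lemma set_integral_f_minus_jump_steps:
  assumes F: "finite F" "F \<subseteq> {a..<b}"
  shows "(LINT x:({a..<b} - F)|\<mu>. f x - jump_steps F x - c)
    = (LINT x:({a..<b} - F)|\<mu>. f x) - (LINT x:({a..<b} - F)|\<mu>. jump_steps F x)
      - c * measure \<mu> ({a..<b} - F)"
  using F emeasure_less_top[of "{a..<b} - F"]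
  by (subst set_integral_diff(2) set_integral_const;
      auto intro!: set_integral_diff(1) set_integrable_f set_integrable_jump_steps
                   set_integrable_const_real Diff_finite_in_sets_borel)+

lemma abs_set_integral_f_minus_jump_steps_le:
  fixes c M :: real
  assumes M: "\<And>x. x \<in> {a..b} \<Longrightarrow> \<bar>fC x - c\<bar> \<le> M" and F: "finite F" "F \<subseteq> {a..<b}"
  defines "e \<equiv> infsum Jg ({a..<b} - F)"
  shows "\<bar>LINT x:({a..<b} - F)|\<mu>. f x - jump_steps F x - c\<bar>
    \<le> M * (gC b - gC a) + (M + H * (g b - g a)) * e"
proof -
  let ?R = "{a..<b} - F"
  have R: "?R \<in> sets \<mu>" "emeasure \<mu> ?R < \<infinity>"
    using F Diff_finite_in_sets_borel[of "{a..<b}" F] emeasure_less_top[of ?R] by auto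
  have measure_R: "measure \<mu> ?R = gC b - gC a + e"
    unfolding e_def using measure_Ico_Diff_finite_cont_part[OF _ F(1)] a_less_b by simp
  have "measure \<mu> ?R = g b - g a - sum Jg F"
    using measure_Ico_Diff_finite[OF _ _ _ F] a_less_b by simp
  moreover have "0 \<le> sum Jg F"
    using F jump_nonneg by (intro sum_nonneg) auto
  ultimately have measure_R_le: "measure \<mu> ?R \<le> g b - g a" by simp
  have "set_integrable \<mu> ?R (\<lambda>x. f x - jump_steps F x - c)"
    using F R by (intro set_integral_diff(1) set_integrable_f set_integrable_jump_steps
                   set_integrable_const_real) (auto intro: Diff_finite_in_sets_borel)
  then have "\<bar>LINT x:?R|\<mu>. f x - jump_steps F x - c\<bar> \<le> (M + H * e) * measure \<mu> ?R"
  proof (rule set_integral_abs_le[OF _ R])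
    fix x assume "x \<in> ?R"
    then have x: "x \<in> {a..b}" by auto
    have "\<bar>f x - jump_steps F x - c\<bar> \<le> \<bar>fC x - c\<bar> + \<bar>f x - fC x - jump_steps F x\<bar>"
      by linarith
    also have "\<dots> \<le> M + H * e"
      unfolding e_def using M[OF x] abs_f_minus_jump_steps_le[OF F x] by linarith
    finally show "\<bar>f x - jump_steps F x - c\<bar> \<le> M + H * e" .
  qed
  also have "\<dots> = M * (gC b - gC a) + M * e + H * e * measure \<mu> ?R"
    by (simp add: measure_R algebra_simps)
  also have "H * e * measure \<mu> ?R \<le> H * e * (g b - g a)"
    unfolding e_def using H_nonneg infsum_jump_nonneg[of ?R]
    by (intro mult_left_mono measure_R_le) auto
  finally show ?thesis by (simp add: algebra_simps)
qed

lemma quadrature_error_le_finite_jumps: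
  fixes c M :: real
  assumes M: "\<And>x. x \<in> {a..b} \<Longrightarrow> \<bar>fC x - c\<bar> \<le> M" and F: "finite F" "F \<subseteq> {a..<b}"
  shows "\<bar>c * (gC b - gC a) + infsum jump_term {a..<b} - (LINT x:{a..<b}|\<mu>. f x)\<bar>
    \<le> M * (gC b - gC a) + (\<bar>f a\<bar> + M + \<bar>c\<bar> + 4 * H * (g b - g a)) * infsum Jg ({a..<b} - F)"
proof -
  define R where "R = {a..<b} - F"
  define e where "e = infsum Jg R"
  define tails where "tails = (\<Sum>s\<in>F. Jf s * infsum Jg ({s..<b} - F))"
  define rest where "rest = (LINT x:R|\<mu>. f x - jump_steps F x - c)"
  have "(LINT x:R|\<mu>. jump_steps F x) = (\<Sum>s\<in>F. Jf s * (gC b - gC s)) + tails"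
    unfolding R_def tails_def set_integral_jump_steps[OF F] distrib_left sum.distrib by simp
  moreover have "infsum jump_term {a..<b} = sum jump_term F + infsum jump_term R"
    unfolding R_def using F by (intro infsum_split_finite jump_term_summable_on) auto
  moreover have "sum jump_term F = (\<Sum>s\<in>F. f s * Jg s) + (\<Sum>s\<in>F. Jf s * (gC b - gC s))"
    by (simp add: sum.distrib)
  moreover have "c * measure \<mu> R = c * (gC b - gC a) + c * e"
    unfolding R_def e_def using measure_Ico_Diff_finite_cont_part[OF _ F(1), of a] a_less_b
    by (simp add: distrib_left)
  ultimately have "c * (gC b - gC a) + infsum jump_term {a..<b} - (LINT x:{a..<b}|\<mu>. f x)
      = infsum jump_term R - rest - tails - c * e"
    using set_integral_remove_atoms[OF F] set_integral_f_minus_jump_steps[OF F, of c]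
    unfolding rest_def R_def by linarith
  moreover have "\<bar>c * e\<bar> = \<bar>c\<bar> * e"
    unfolding e_def R_def using infsum_jump_nonneg[of "{a..<b} - F"] by (simp add: abs_mult)
  ultimately show ?thesis
    using abs_infsum_jump_term_le[of R] abs_sum_jump_tails_le[OF F]
      abs_set_integral_f_minus_jump_steps_le[OF M F]
    unfolding rest_def tails_def e_def R_def
    by (simp add: algebra_simps abs_le_iff)
qed

lemma quadrature_error_le:
  fixes c M :: real
  assumes M: "\<And>x. x \<in> {a..b} \<Longrightarrow> \<bar>fC x - c\<bar> \<le> M"
  shows "\<bar>c * (gC b - gC a) + infsum jump_term {a..<b} - (LINT x:{a..<b}|\<mu>. f x)\<bar>
    \<le> M * (gC b - gC a)" (is "?err \<le> _")
proof (rule field_le_epsilon)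
  fix \<epsilon> :: real assume "0 < \<epsilon>"
  define K where "K = \<bar>f a\<bar> + M + \<bar>c\<bar> + 4 * H * (g b - g a)"
  have "0 \<le> M" using M[of a] a_less_b by force
  then have K: "0 \<le> K"
    unfolding K_def using H_nonneg mono_onD[OF mono_g, of a b] a_less_b by simp
  obtain F where F: "finite F" "F \<subseteq> {a..<b}" and small: "infsum Jg ({a..<b} - F) < \<epsilon> / (K + 1)"
    using jump_mass_outside_finite_small[of "\<epsilon> / (K + 1)"] \<open>0 < \<epsilon>\<close> K by auto
  have "?err \<le> M * (gC b - gC a) + K * infsum Jg ({a..<b} - F)"
    unfolding K_def using quadrature_error_le_finite_jumps[OF M F] .
  also have "K * infsum Jg ({a..<b} - F) \<le> K * (\<epsilon> / (K + 1))"
    using small K by (intro mult_left_mono) auto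
  also have "K * (\<epsilon> / (K + 1)) \<le> \<epsilon>"
    using K \<open>0 < \<epsilon>\<close> by (simp add: field_simps)
  finally show "?err \<le> M * (gC b - gC a) + \<epsilon>" by simp
qed

end

theorem mainTheorem7:
  fixes f g :: "real \<Rightarrow> real" and a b H :: real
  assumes ab: "a < b"
    and g_mono: "mono_on {a..b} g"
    and g_left_cont: "\<And>t. t \<in> {a<..b} \<Longrightarrow> continuous (at_left t) g"
    and f_glip: "g_lipschitz_on {a..b} H g f"
    and fC_lip: "lipschitz_const_on {a..b} H (cont_part a f)"
    and gC_lip: "lipschitz_const_on {a..b} H (cont_part a g)"
  defines "S \<equiv> f a * jump_plus g a + jump_plus f a * (cont_part a g b - cont_part a g a)
            + (\<Sum>\<^sub>\<infinity>d\<in>{t \<in> {a<..<b}. \<not> isCont g t}. f d * jump_plus g d + jump_plus f d * (cont_part a g b - cont_part a g d))"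
    and "I \<equiv> (LINT x : {a..<b} | LS_measure a b g. f x)"
  shows "\<bar>cont_part a f a * (cont_part a g b - cont_part a g a) + S - I\<bar> \<le> H\<^sup>2 * (b - a)\<^sup>2
       \<and> \<bar>(cont_part a f a + cont_part a f b) / 2 * (cont_part a g b - cont_part a g a) + S - I\<bar>
           \<le> H\<^sup>2 / 2 * (b - a)\<^sup>2"
proof -
  have "a \<in> {a..b}" "b \<in> {a..b}" using ab by auto
  then have "0 \<le> H * \<bar>b - a\<bar>"
    using fC_lip unfolding lipschitz_const_on_def by (meson abs_ge_zero order_trans)
  then have H: "0 \<le> H" using ab by (simp add: zero_le_mult_iff)
  interpret g_lipschitz_integrand a b g f H
    by unfold_locales (use ab g_mono g_left_cont f_glip H in auto)
  have S: "S = infsum jump_term {a..<b}"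
    unfolding S_def infsum_jump_term_discontinuities by simp
  have X: "gC b - gC a \<le> H * (b - a)"
    using lipschitz_const_on_bound_left[OF gC_lip _ H, of b] ab by auto
  have "\<bar>fC a * (gC b - gC a) + S - I\<bar> \<le> H * (b - a) * (gC b - gC a)"
    unfolding S I_def using lipschitz_const_on_bound_left[OF fC_lip _ H] by (intro quadrature_error_le) auto
  also have "\<dots> \<le> H * (b - a) * (H * (b - a))"
    using X H ab by (intro mult_left_mono) auto
  moreover have "\<bar>(fC a + fC b) / 2 * (gC b - gC a) + S - I\<bar> \<le> H * (b - a) / 2 * (gC b - gC a)"
    unfolding S I_def using lipschitz_const_on_bound_midpoint[OF fC_lip] by (intro quadrature_error_le) auto
  moreover have "\<dots> \<le> H * (b - a) / 2 * (H * (b - a))"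
    using X H ab by (intro mult_left_mono) auto
  ultimately show ?thesis by (simp add: power2_eq_square algebra_simps)
qed

end
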